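(* Let $G$ be a finite subgroup of $O(d)$ and $p\ge1$ an integer such that every $G$-invariant homogeneous polynomial of degree $2p$ on $\mathbb{R}^d$ is a scalar multiple of $|x|^{2p}$. Then there is a homogeneous symmetric polynomial $F_p$ of degree $p$ in $d$ variables such that for every real symmetric $d\times d$ matrix $M$ and every $y\in\mathbb{R}^d$, $$\frac{1}{|G|}\sum_{U\in G}\langle M,P_{Uy}\rangle_{HS}^p=F_p(\sigma(M))\,|P_y|_{HS}^p=F_p(\sigma(M))\,|y|^{2p},$$ where $\sigma(M)$ is the multiset of eigenvalues of $M$ (with multiplicity).
   Context: For $y\in\mathbb{R}^d$, $P_y=yy^\dagger$ ($\dagger$ = transpose). $\langle A,B\rangle_{HS}=\operatorname{tr}(A^\dagger B)$ is the Hilbert–Schmidt inner product and $|A|_{HS}=\langle A,A\rangle_{HS}^{1/2}$. *)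

theory Defs
  imports "HOL-Analysis.Analysis"
begin

definition proj :: "real^'n \<Rightarrow> real^'n^'n" where
  "proj y = (\<chi> i j. y $ i * y $ j)"

definition hs_inner :: "real^'n^'n \<Rightarrow> real^'n^'n \<Rightarrow> real" where
  "hs_inner A B = trace (transpose A ** B)"

definition hs_norm :: "real^'n^'n \<Rightarrow> real" where
  "hs_norm A = sqrt (hs_inner A A)"

definition hom_poly :: "nat \<Rightarrow> (real^'n \<Rightarrow> real) \<Rightarrow> bool" where
  "hom_poly k f \<longleftrightarrow> (\<exists>c :: ('n \<Rightarrow> nat) \<Rightarrow> real.
     \<forall>x. f x = (\<Sum>\<alpha>\<in>{\<alpha>::'n \<Rightarrow> nat. sum \<alpha> UNIV = k}. c \<alpha> * (\<Prod>i\<in>UNIV. (x $ i) ^ (\<alpha> i))))"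

definition symmetric_fun :: "(real^'n \<Rightarrow> real) \<Rightarrow> bool" where
  "symmetric_fun F \<longleftrightarrow> (\<forall>\<pi> x. \<pi> permutes (UNIV::'n set) \<longrightarrow> F (\<chi> i. x $ \<pi> i) = F x)"

text \<open>lam lists the eigenvalues of M with algebraic multiplicity:
  the characteristic polynomial det(t I - M) factors as prod_i (t - lam_i).\<close>
definition eigen_list :: "real^'n \<Rightarrow> real^'n^'n \<Rightarrow> bool" where
  "eigen_list lam M \<longleftrightarrow> (\<forall>t. det (t *\<^sub>R mat 1 - M) = (\<Prod>i\<in>UNIV. t - lam $ i))"

definition symmetric_mat :: "real^'n^'n \<Rightarrow> bool" where
  "symmetric_mat M \<longleftrightarrow> transpose M = M"

end

theory Submission
  imports Defs "HOL-Computational_Algebra.Polynomial"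
begin

text \<open>
  By the spectral theorem M = R^T D R with R orthogonal and D = diag(mu), so that
  hs_inner M (proj (U y)) = q(R U y) for the diagonal quadratic form q of mu. The hypothesis,
  applied to the orbit power sums of (w \<bullet> U y)^(2p) over U in G, which are symmetric in w and y,
  makes them a constant multiple of |w|^(2p) |y|^(2p). Hence these sums, and by polarization the
  orbit sums of all products of 2p linear forms, do not change when U y is replaced by R U y.
  Expanding q^p into such products, the average of hs_inner M (proj (U y))^p over G equals that
  of q(U y)^p, which by the hypothesis again is F(mu) |y|^(2p), with F(mu) its value at a unit
  vector. F is a homogeneous polynomial of degree p in mu, and it is symmetric because permuting
  mu amounts to conjugating D by a permutation matrix.
\<close>

section \<open>Homogeneous polynomials\<close>

lemma finite_exponents_of_degree:
  "finite {\<alpha>::'n::finite \<Rightarrow> nat. sum \<alpha> UNIV = k}"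
proof (rule finite_subset)
  show "{\<alpha>::'n \<Rightarrow> nat. sum \<alpha> UNIV = k} \<subseteq> PiE UNIV (\<lambda>_. {..k})"
    by (auto simp: PiE_UNIV_domain intro: member_le_sum)
qed (rule finite_PiE; simp)

lemma hom_poly_add:
  "hom_poly k f \<Longrightarrow> hom_poly k g \<Longrightarrow> hom_poly k (\<lambda>x. f x + g x)"
  unfolding hom_poly_def by (fastforce intro: exI[of _ "\<lambda>\<alpha>. _ \<alpha> + _ \<alpha>"] simp: distrib_right sum.distrib)

lemma hom_poly_cmult: "hom_poly k f \<Longrightarrow> hom_poly k (\<lambda>x. a * f x)"
  unfolding hom_poly_def by (fastforce intro: exI[of _ "\<lambda>\<alpha>. a * _ \<alpha>"] simp: sum_distrib_left mult.assoc)

lemma hom_poly_sum: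
  "finite I \<Longrightarrow> (\<And>i. i \<in> I \<Longrightarrow> hom_poly k (f i)) \<Longrightarrow> hom_poly k (\<lambda>x. \<Sum>i\<in>I. f i x)"
proof (induction I rule: finite_induct)
  case empty
  show ?case unfolding hom_poly_def by (rule exI[of _ "\<lambda>_. 0"]) simp
next
  case (insert j I)
  then show ?case by (simp add: hom_poly_add)
qed

lemma hom_poly_one: "hom_poly 0 (\<lambda>x::real^'n. 1)"
proof -
  have "{\<alpha>::'n \<Rightarrow> nat. sum \<alpha> UNIV = 0} = {\<lambda>_. 0}" by (auto simp: fun_eq_iff)
  then show ?thesis unfolding hom_poly_def by (intro exI[of _ "\<lambda>_. 1"]) simp
qed

lemma hom_poly_coordinate: "hom_poly 1 (\<lambda>x::real^'n. x $ j)"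
proof -
  define \<delta> :: "'n \<Rightarrow> nat" where "\<delta> = (\<lambda>i. if i = j then 1 else 0)"
  have \<delta>: "sum \<delta> UNIV = 1" "(\<Prod>i\<in>UNIV. x $ i ^ \<delta> i) = x $ j" for x :: "real^'n"
    by (simp_all add: \<delta>_def if_distrib prod.delta sum.delta cong: if_cong)
  show ?thesis unfolding hom_poly_def
    by (intro exI[of _ "\<lambda>\<alpha>. if \<alpha> = \<delta> then 1 else 0"] allI)
       (simp add: \<delta> if_distrib[of "\<lambda>t. t * _"] sum.delta[OF finite_exponents_of_degree] cong: if_cong)
qed

lemma hom_poly_mult:
  fixes f g :: "real^'n \<Rightarrow> real"
  assumes "hom_poly a f" "hom_poly b g"
  shows "hom_poly (a + b) (\<lambda>x. f x * g x)"
proof -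
  let ?E = "\<lambda>k. {\<alpha>::'n \<Rightarrow> nat. sum \<alpha> UNIV = k}"
  let ?m = "\<lambda>\<alpha> (x::real^'n). \<Prod>i\<in>UNIV. x $ i ^ \<alpha> i"
  obtain c where c: "\<And>x. f x = (\<Sum>\<alpha>\<in>?E a. c \<alpha> * ?m \<alpha> x)"
    using assms(1) unfolding hom_poly_def by blast
  obtain d where d: "\<And>x. g x = (\<Sum>\<beta>\<in>?E b. d \<beta> * ?m \<beta> x)"
    using assms(2) unfolding hom_poly_def by blast
  define P where "P = ?E a \<times> ?E b"
  define s :: "('n \<Rightarrow> nat) \<times> ('n \<Rightarrow> nat) \<Rightarrow> 'n \<Rightarrow> nat"
    where "s = (\<lambda>(\<alpha>, \<beta>) i. \<alpha> i + \<beta> i)"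
  have finP: "finite P" unfolding P_def using finite_exponents_of_degree by blast
  have sP: "s ` P \<subseteq> ?E (a + b)" by (auto simp: P_def s_def sum.distrib)
  show ?thesis unfolding hom_poly_def
  proof (intro exI[of _ "\<lambda>\<gamma>. \<Sum>q\<in>{q\<in>P. s q = \<gamma>}. c (fst q) * d (snd q)"] allI)
    fix x :: "real^'n"
    have "f x * g x = (\<Sum>q\<in>P. c (fst q) * d (snd q) * ?m (s q) x)"
      unfolding c d sum_product P_def sum.cartesian_product
      by (rule sum.cong) (auto simp: s_def power_add prod.distrib)
    also have "\<dots> = (\<Sum>\<gamma>\<in>?E (a + b). \<Sum>q\<in>{q\<in>P. s q = \<gamma>}. c (fst q) * d (snd q) * ?m (s q) x)"
      by (rule sum.group[symmetric, OF finP finite_exponents_of_degree sP])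
    also have "\<dots> = (\<Sum>\<gamma>\<in>?E (a + b). (\<Sum>q\<in>{q\<in>P. s q = \<gamma>}. c (fst q) * d (snd q)) * ?m \<gamma> x)"
      unfolding sum_distrib_right by (rule sum.cong) auto
    finally show "f x * g x = \<dots>" .
  qed
qed

lemma hom_poly_prod:
  "finite I \<Longrightarrow> (\<And>i. i \<in> I \<Longrightarrow> hom_poly (d i) (f i)) \<Longrightarrow> hom_poly (\<Sum>i\<in>I. d i) (\<lambda>x. \<Prod>i\<in>I. f i x)"
  by (induction I rule: finite_induct) (simp_all add: hom_poly_one hom_poly_mult)

lemma hom_poly_power: "hom_poly k f \<Longrightarrow> hom_poly (k * m) (\<lambda>x. f x ^ m)"
  using hom_poly_prod[of "{..<m}" "\<lambda>_. k" "\<lambda>_. f"] by (simp add: mult.commute)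

lemma hom_poly_linear: "hom_poly 1 (\<lambda>x. \<Sum>i\<in>UNIV. a i * x $ i)"
  by (intro hom_poly_sum hom_poly_cmult hom_poly_coordinate) simp

lemma hom_poly_linear_comp:
  fixes f :: "real^'n \<Rightarrow> real" and A :: "real^'m^'n"
  assumes "hom_poly k f"
  shows "hom_poly k (\<lambda>x. f (A *v x))"
proof -
  obtain c where c: "\<And>x. f x = (\<Sum>\<alpha>\<in>{\<alpha>::'n \<Rightarrow> nat. sum \<alpha> UNIV = k}. c \<alpha> * (\<Prod>i\<in>UNIV. x $ i ^ \<alpha> i))"
    using assms unfolding hom_poly_def by blast
  have row: "hom_poly 1 (\<lambda>x. (A *v x) $ i)" for i
    using hom_poly_linear[of "\<lambda>j. A $ i $ j"] by (simp add: matrix_vector_mult_def)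
  have "hom_poly k (\<lambda>x. \<Sum>\<alpha>\<in>{\<alpha>. sum \<alpha> UNIV = k}. c \<alpha> * (\<Prod>i\<in>UNIV. (A *v x) $ i ^ \<alpha> i))"
  proof (intro hom_poly_sum[OF finite_exponents_of_degree] hom_poly_cmult)
    fix \<alpha> :: "'n \<Rightarrow> nat" assume "\<alpha> \<in> {\<alpha>. sum \<alpha> UNIV = k}"
    then show "hom_poly k (\<lambda>x. \<Prod>i\<in>UNIV. (A *v x) $ i ^ \<alpha> i)"
      using hom_poly_prod[of UNIV \<alpha> "\<lambda>i x. (A *v x) $ i ^ \<alpha> i"] hom_poly_power[OF row] by simp
  qed
  then show ?thesis by (simp add: c)
qed

section \<open>Polarization\<close>

definition alternating_subset_sum :: "(nat \<Rightarrow> real) \<Rightarrow> nat \<Rightarrow> real \<Rightarrow> nat \<Rightarrow> real" where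
  "alternating_subset_sum l n c m = (\<Sum>S\<in>Pow {..<n}. (-1) ^ (n - card S) * (c + sum l S) ^ m)"

lemma alternating_subset_sum_binomial:
  "alternating_subset_sum l n c m =
     (\<Sum>j\<le>m. of_nat (m choose j) * c ^ (m - j) * alternating_subset_sum l n 0 j)"
proof -
  have "alternating_subset_sum l n c m =
      (\<Sum>S\<in>Pow {..<n}. \<Sum>j\<le>m. (-1) ^ (n - card S) * (of_nat (m choose j) * c ^ (m - j) * sum l S ^ j))"
    unfolding alternating_subset_sum_def
  proof (rule sum.cong)
    fix S
    have "(c + sum l S) ^ m = (\<Sum>j\<le>m. of_nat (m choose j) * sum l S ^ j * c ^ (m - j))"
      by (subst add.commute) (rule binomial_ring)
    then show "(-1) ^ (n - card S) * (c + sum l S) ^ m =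
        (\<Sum>j\<le>m. (-1) ^ (n - card S) * (of_nat (m choose j) * c ^ (m - j) * sum l S ^ j))"
      by (simp add: sum_distrib_left ac_simps)
  qed simp
  also have "\<dots> = (\<Sum>j\<le>m. \<Sum>S\<in>Pow {..<n}. (-1) ^ (n - card S) * (of_nat (m choose j) * c ^ (m - j) * sum l S ^ j))"
    by (rule sum.swap)
  finally show ?thesis
    unfolding alternating_subset_sum_def by (simp add: sum_distrib_left ac_simps)
qed

lemma alternating_subset_sum_Suc:
  "alternating_subset_sum l (Suc n) c m = alternating_subset_sum l n (c + l n) m - alternating_subset_sum l n c m"
proof -
  have Pow_Suc: "Pow {..<Suc n} = Pow {..<n} \<union> insert n ` Pow {..<n}"
    by (simp add: lessThan_Suc Pow_insert)
  have disjoint: "Pow {..<n} \<inter> insert n ` Pow {..<n} = {}" by auto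
  have inj: "inj_on (insert n) (Pow {..<n})"
    by (rule inj_onI) (metis Pow_iff insert_ident lessThan_iff less_irrefl subsetD)
  have card_le: "S \<in> Pow {..<n} \<Longrightarrow> card S \<le> n" for S
    by (metis PowD card_lessThan card_mono finite_lessThan)
  have fresh: "S \<in> Pow {..<n} \<Longrightarrow> n \<notin> S \<and> finite S" for S
    by (auto intro: finite_subset)
  have "alternating_subset_sum l (Suc n) c m =
      (\<Sum>S\<in>Pow {..<n}. (-1) ^ (Suc n - card S) * (c + sum l S) ^ m)
      + (\<Sum>S\<in>Pow {..<n}. (-1) ^ (Suc n - card (insert n S)) * (c + sum l (insert n S)) ^ m)"
    unfolding alternating_subset_sum_def Pow_Suc
    by (simp add: sum.union_disjoint[OF _ _ disjoint] sum.reindex[OF inj])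
  also have "(\<Sum>S\<in>Pow {..<n}. (-1) ^ (Suc n - card S) * (c + sum l S) ^ m) = - alternating_subset_sum l n c m"
    unfolding alternating_subset_sum_def sum_negf[symmetric]
    by (rule sum.cong) (auto simp: Suc_diff_le card_le)
  also have "(\<Sum>S\<in>Pow {..<n}. (-1) ^ (Suc n - card (insert n S)) * (c + sum l (insert n S)) ^ m)
      = alternating_subset_sum l n (c + l n) m"
    unfolding alternating_subset_sum_def by (rule sum.cong) (simp_all add: fresh add.assoc)
  finally show ?thesis by simp
qed

text \<open>The n-th finite difference of a polynomial of degree m vanishes for m < n
  and is n! times the product of the steps for m = n.\<close>
lemma alternating_subset_sum_degree:
  "(\<forall>m c. m < n \<longrightarrow> alternating_subset_sum l n c m = 0) \<and>
   (\<forall>c. alternating_subset_sum l n c n = fact n * (\<Prod>k<n. l k))"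
proof (induction n)
  case 0
  show ?case by (simp add: alternating_subset_sum_def)
next
  case (Suc n)
  then have below: "\<And>m c. m < n \<Longrightarrow> alternating_subset_sum l n c m = 0"
    and top: "\<And>c. alternating_subset_sum l n c n = fact n * (\<Prod>k<n. l k)"
    by auto
  have "alternating_subset_sum l (Suc n) c m = 0" if "m < Suc n" for m c
    using that less_Suc_eq[of m n] by (auto simp: alternating_subset_sum_Suc below top)
  moreover have "alternating_subset_sum l (Suc n) c (Suc n) = fact (Suc n) * (\<Prod>k<Suc n. l k)" for c
  proof -
    let ?g = "\<lambda>j. of_nat (Suc n choose j) * ((c + l n) ^ (Suc n - j) - c ^ (Suc n - j))
                  * alternating_subset_sum l n 0 j"
    have "alternating_subset_sum l (Suc n) c (Suc n) = (\<Sum>j\<le>Suc n. ?g j)"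
      unfolding alternating_subset_sum_Suc alternating_subset_sum_binomial[of l n _ "Suc n"]
        sum_subtractf[symmetric]
      by (rule sum.cong) (simp_all add: left_diff_distrib right_diff_distrib)
    also have "\<dots> = (\<Sum>j\<le>Suc n. if j = n then of_nat (Suc n) * l n * (fact n * (\<Prod>k<n. l k)) else 0)"
    proof (rule sum.cong)
      fix j assume "j \<in> {..Suc n}"
      then consider "j < n" | "j = n" | "j = Suc n" by force
      then show "?g j = (if j = n then of_nat (Suc n) * l n * (fact n * (\<Prod>k<n. l k)) else 0)"
        by cases (simp_all add: below top)
    qed simp
    also have "\<dots> = fact (Suc n) * (\<Prod>k<Suc n. l k)"
      by simp
    finally show ?thesis .
  qed
  ultimately show ?case by (auto simp: less_Suc_eq)
qed

lemma polarization_identity: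
  fixes l :: "nat \<Rightarrow> real"
  shows "fact n * (\<Prod>k<n. l k) = (\<Sum>S\<in>Pow {..<n}. (-1) ^ (n - card S) * sum l S ^ n)"
proof -
  have "alternating_subset_sum l n 0 n = fact n * (\<Prod>k<n. l k)"
    using alternating_subset_sum_degree[of n l] by blast
  then show ?thesis by (simp add: alternating_subset_sum_def)
qed

lemma sum_prod_inner_eqI:
  fixes a b :: "'i \<Rightarrow> 'v::real_inner"
  assumes "\<And>w. (\<Sum>i\<in>I. (w \<bullet> a i) ^ N) = (\<Sum>i\<in>I. (w \<bullet> b i) ^ N)"
  shows "(\<Sum>i\<in>I. \<Prod>k<N. w k \<bullet> a i) = (\<Sum>i\<in>I. \<Prod>k<N. w k \<bullet> b i)"
proof -
  have polar: "(\<Prod>k<N. w k \<bullet> x) = (\<Sum>S\<in>Pow {..<N}. (-1) ^ (N - card S) * (sum w S \<bullet> x) ^ N) / fact N"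
    for x
    using polarization_identity[of N "\<lambda>k. w k \<bullet> x"] by (simp add: inner_sum_left field_simps)
  have "(\<Sum>i\<in>I. \<Prod>k<N. w k \<bullet> a i) =
      (\<Sum>S\<in>Pow {..<N}. (-1) ^ (N - card S) * (\<Sum>i\<in>I. (sum w S \<bullet> a i) ^ N)) / fact N"
    unfolding polar by (simp add: sum_divide_distrib sum_distrib_left sum.swap[of _ I])
  also have "\<dots> = (\<Sum>i\<in>I. \<Prod>k<N. w k \<bullet> b i)"
    unfolding polar assms by (simp add: sum_divide_distrib sum_distrib_left sum.swap[of _ I])
  finally show ?thesis .
qed

section \<open>Quadratic forms\<close>

definition quad_form :: "real^'n^'n \<Rightarrow> real^'n \<Rightarrow> real" where
  "quad_form M x = x \<bullet> (M *v x)"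

lemma inner_transpose_mult:
  fixes R :: "real^'n^'m"
  shows "x \<bullet> (transpose R *v z) = (R *v x) \<bullet> z"
  using dot_lmul_matrix[of z R x] by (simp add: inner_commute)

lemma quad_form_conj: "quad_form (transpose R ** M ** R) x = quad_form M (R *v x)"
  by (simp add: quad_form_def matrix_vector_mul_assoc[symmetric] inner_transpose_mult
      del: transpose_matrix_vector)

lemma hom_poly_inner: "hom_poly 1 (\<lambda>x. w \<bullet> x)"
  using hom_poly_linear[of "\<lambda>i. w $ i"] by (simp add: inner_vec_def)

lemma hom_poly_quad_form: "hom_poly 2 (quad_form M)"
proof -
  have "hom_poly (1 + 1) (\<lambda>x. \<Sum>i\<in>UNIV. x $ i * (M *v x) $ i)"
    using hom_poly_linear_comp[OF hom_poly_coordinate, of M]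
    by (intro hom_poly_sum hom_poly_mult hom_poly_coordinate) simp_all
  then show ?thesis unfolding quad_form_def inner_vec_def one_add_one by (simp add: mult.commute)
qed

lemma prod_interleave:
  fixes a b :: "nat \<Rightarrow> 'a::comm_monoid_mult"
  shows "(\<Prod>k<p. a k * b k) = (\<Prod>k<2 * p. if even k then a (k div 2) else b (k div 2))"
proof (induction p)
  case (Suc p)
  have "2 * Suc p = Suc (Suc (2 * p))" by simp
  then show ?case using Suc by (simp add: mult_ac)
qed simp

lemma power_sum_mult_expand:
  fixes a b :: "'i \<Rightarrow> real"
  assumes "finite I"
  shows "(\<Sum>i\<in>I. a i * b i) ^ p =
    (\<Sum>f\<in>PiE {..<p} (\<lambda>_. I). \<Prod>k<2 * p. if even k then a (f (k div 2)) else b (f (k div 2)))"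
proof -
  have "(\<Sum>i\<in>I. a i * b i) ^ p = (\<Prod>k<p. \<Sum>i\<in>I. a i * b i)" by simp
  also have "\<dots> = (\<Sum>f\<in>PiE {..<p} (\<lambda>_. I). \<Prod>k<p. a (f k) * b (f k))"
    by (rule prod_sum_PiE) (simp_all add: assms)
  finally show ?thesis by (simp add: prod_interleave)
qed

lemma power_quad_form_expand:
  "quad_form M x ^ p =
    (\<Sum>f\<in>PiE {..<p} (\<lambda>_. UNIV). \<Prod>k<2 * p.
       (if even k then axis (f (k div 2)) 1 else M $ f (k div 2)) \<bullet> x)"
proof -
  have "quad_form M x = (\<Sum>i\<in>UNIV. (axis i 1 \<bullet> x) * (M $ i \<bullet> x))"
    unfolding quad_form_def inner_vec_def[of x] matrix_vector_mul_component inner_axis' by simp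
  then show ?thesis
    by (simp add: power_sum_mult_expand if_distrib[of "\<lambda>v. v \<bullet> x"] cong: if_cong)
qed

definition diag_mat :: "real^'n \<Rightarrow> real^'n^'n" where
  "diag_mat \<mu> = (\<chi> i j. if i = j then \<mu> $ i else 0)"

lemma diag_mat_vector: "(diag_mat \<mu> *v x) $ i = \<mu> $ i * x $ i"
  by (simp add: diag_mat_def matrix_vector_mult_def if_distrib[of "\<lambda>t. t * _"] cong: if_cong)

lemma quad_form_diag_mat: "quad_form (diag_mat \<mu>) x = (\<Sum>i\<in>UNIV. (x $ i)\<^sup>2 * \<mu> $ i)"
  by (simp add: quad_form_def inner_vec_def diag_mat_vector power2_eq_square mult_ac)

definition permutation_matrix :: "('n \<Rightarrow> 'n) \<Rightarrow> real^'n^'n" where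
  "permutation_matrix \<pi> = (\<chi> i j. if j = inv \<pi> i then 1 else 0)"

lemma permutation_matrix_vector: "(permutation_matrix \<pi> *v z) $ i = z $ inv \<pi> i"
  by (simp add: permutation_matrix_def matrix_vector_mult_def if_distrib[of "\<lambda>t. t * _"] cong: if_cong)

lemma orthogonal_permutation_matrix:
  assumes "\<pi> permutes UNIV"
  shows "orthogonal_matrix (permutation_matrix \<pi>)"
proof -
  have "inj (inv \<pi>)" using assms permutes_inv permutes_inj by blast
  moreover have "row i (permutation_matrix \<pi>) = axis (inv \<pi> i) 1" for i
    by (simp add: permutation_matrix_def row_def axis_def vec_eq_iff eq_commute)
  ultimately show ?thesis unfolding orthogonal_matrix_orthonormal_rows
    by (auto simp: orthogonal_def inner_axis_axis inj_def)
qed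

lemma quad_form_diag_mat_permute:
  assumes "\<pi> permutes UNIV"
  shows "quad_form (diag_mat (\<chi> i. \<mu> $ \<pi> i)) z = quad_form (diag_mat \<mu>) (permutation_matrix \<pi> *v z)"
proof -
  have "(\<Sum>i\<in>UNIV. (z $ i)\<^sup>2 * \<mu> $ \<pi> i) = (\<Sum>j\<in>UNIV. (z $ inv \<pi> j)\<^sup>2 * \<mu> $ \<pi> (inv \<pi> j))"
    using sum.permute[OF permutes_inv[OF assms], of "\<lambda>i. (z $ i)\<^sup>2 * \<mu> $ \<pi> i"] by (simp add: comp_def)
  then show ?thesis
    by (simp add: quad_form_diag_mat permutation_matrix_vector permutes_inverses(1)[OF assms])
qed

section \<open>Orbit sums over a finite orthogonal group\<close>

lemma matrix_inv_orthogonal: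
  assumes "orthogonal_matrix U"
  shows "matrix_inv U = transpose U"
proof -
  have U: "U ** transpose U = mat 1 \<and> transpose U ** U = mat 1"
    using assms by (simp add: orthogonal_matrix_def)
  then have "U ** matrix_inv U = mat 1 \<and> matrix_inv U ** U = mat 1"
    unfolding matrix_inv_def by (rule someI)
  then have "transpose U ** (U ** matrix_inv U) = transpose U" by simp
  then show ?thesis using U by (simp add: matrix_mul_assoc)
qed

lemma norm_orthogonal_matrix_vector:
  fixes Q :: "real^'n^'n"
  shows "orthogonal_matrix Q \<Longrightarrow> norm (Q *v x) = norm x"
  using orthogonal_transformation_norm[of "(*v) Q"]
  by (simp add: orthogonal_transformation_matrix)

definition radial_invariants :: "(real^'n^'n) set \<Rightarrow> nat \<Rightarrow> bool" where
  "radial_invariants G N \<longleftrightarrow>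
     (\<forall>f. hom_poly N f \<and> (\<forall>U\<in>G. \<forall>x. f (U *v x) = f x) \<longrightarrow> (\<exists>c. \<forall>x. f x = c * norm x ^ N))"

lemma radial_invariantsD:
  assumes "radial_invariants G N" "hom_poly N f" "\<And>U x. U \<in> G \<Longrightarrow> f (U *v x) = f x"
    and "norm e = 1"
  shows "f x = f e * norm x ^ N"
proof -
  obtain c where "\<And>x. f x = c * norm x ^ N"
    using assms(1-3) unfolding radial_invariants_def by blast
  then show ?thesis using assms(4) by simp
qed

locale finite_orthogonal_group =
  fixes G :: "(real^'n^'n) set"
  assumes finite_G: "finite G"
    and orthogonal_G: "U \<in> G \<Longrightarrow> orthogonal_matrix U"
    and mult_closed: "A \<in> G \<Longrightarrow> B \<in> G \<Longrightarrow> A ** B \<in> G"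
    and inv_closed: "A \<in> G \<Longrightarrow> matrix_inv A \<in> G"
begin

lemma transpose_closed: "U \<in> G \<Longrightarrow> transpose U \<in> G"
  using inv_closed orthogonal_G matrix_inv_orthogonal by metis

lemma sum_reindex_transpose: "(\<Sum>U\<in>G. g (transpose U)) = (\<Sum>U\<in>G. g U)"
proof -
  have "transpose ` G = G"
    using transpose_closed by (force intro: image_eqI[of _ transpose "transpose _"])
  then show ?thesis
    using sum.reindex[of transpose G g] by (simp add: inj_on_def)
qed

lemma sum_reindex_mult_right:
  assumes V: "V \<in> G"
  shows "(\<Sum>U\<in>G. g (U ** V)) = (\<Sum>U\<in>G. g U)"
proof -
  have VV: "V ** transpose V = mat 1" using orthogonal_G[OF V] by (simp add: orthogonal_matrix_def)
  have inj: "inj_on (\<lambda>U. U ** V) G"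
  proof (rule inj_onI)
    fix A B assume "A ** V = B ** V"
    then have "A ** V ** transpose V = B ** V ** transpose V" by simp
    then show "A = B" by (simp add: matrix_mul_assoc[symmetric] VV)
  qed
  have "(\<lambda>U. U ** V) ` G = G"
    using endo_inj_surj[OF finite_G _ inj] mult_closed V by blast
  then show ?thesis using sum.reindex[OF inj, of g] by simp
qed

lemma sum_action_invariant:
  "V \<in> G \<Longrightarrow> (\<Sum>U\<in>G. g (U *v (V *v y))) = (\<Sum>U\<in>G. g (U *v y))"
  using sum_reindex_mult_right[of V "\<lambda>U. g (U *v y)"] by (simp add: matrix_vector_mul_assoc)

text \<open>The power sums are symmetric in w and y, so their radiality in y forces radiality in w.\<close>
lemma sum_power_inner_radial:
  assumes radial: "radial_invariants G N" and e: "norm e = 1"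
  shows "(\<Sum>U\<in>G. (w \<bullet> (U *v y)) ^ N) = (\<Sum>U\<in>G. (e \<bullet> (U *v e)) ^ N) * norm w ^ N * norm y ^ N"
proof -
  define A where "A w y = (\<Sum>U\<in>G. (w \<bullet> (U *v y)) ^ N)" for w y
  have radial_A: "A w y = A w e * norm y ^ N" for w y
  proof (rule radial_invariantsD[OF radial _ _ e])
    have "hom_poly (1 * N) (\<lambda>y. (w \<bullet> (U *v y)) ^ N)" for U
      by (rule hom_poly_power[OF hom_poly_linear_comp[OF hom_poly_inner]])
    then show "hom_poly N (A w)"
      unfolding A_def by (intro hom_poly_sum finite_G) simp
    show "A w (U *v y) = A w y" if "U \<in> G" for U y
      unfolding A_def using sum_action_invariant[OF that] .
  qed
  have symmetric_A: "A w y = A y w" for w y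
  proof -
    have "A w y = (\<Sum>U\<in>G. (y \<bullet> (transpose U *v w)) ^ N)"
      unfolding A_def by (simp add: inner_transpose_mult inner_commute del: transpose_matrix_vector)
    also have "\<dots> = A y w" unfolding A_def by (rule sum_reindex_transpose)
    finally show ?thesis .
  qed
  have "A w y = A e e * norm w ^ N * norm y ^ N"
    using radial_A[of w y] radial_A[of e w] symmetric_A[of w e] by simp
  then show ?thesis unfolding A_def .
qed

lemma sum_power_inner_orthogonal_invariant:
  assumes "radial_invariants G N" "orthogonal_matrix R"
  shows "(\<Sum>U\<in>G. (w \<bullet> (R *v (U *v y))) ^ N) = (\<Sum>U\<in>G. (w \<bullet> (U *v y)) ^ N)"
proof -
  define e :: "real^'n" where "e = axis undefined 1"
  have e: "norm e = 1" by (simp add: e_def)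
  let ?c = "\<Sum>U\<in>G. (e \<bullet> (U *v e)) ^ N"
  have "w \<bullet> (R *v z) = (transpose R *v w) \<bullet> z" for z
    using inner_transpose_mult[of w "transpose R" z] by (simp only: transpose_transpose)
  then have "(\<Sum>U\<in>G. (w \<bullet> (R *v (U *v y))) ^ N) = (\<Sum>U\<in>G. ((transpose R *v w) \<bullet> (U *v y)) ^ N)"
    by (simp only:)
  also have "\<dots> = ?c * norm (transpose R *v w) ^ N * norm y ^ N"
    by (rule sum_power_inner_radial[OF assms(1) e])
  also have "\<dots> = ?c * norm w ^ N * norm y ^ N"
    using assms(2) by (simp only: norm_orthogonal_matrix_vector orthogonal_matrix_transpose)
  also have "\<dots> = (\<Sum>U\<in>G. (w \<bullet> (U *v y)) ^ N)"
    by (rule sum_power_inner_radial[OF assms(1) e, symmetric])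
  finally show ?thesis .
qed

lemma sum_prod_inner_orthogonal_invariant:
  assumes "radial_invariants G N" "orthogonal_matrix R"
  shows "(\<Sum>U\<in>G. \<Prod>k<N. w k \<bullet> (R *v (U *v y))) = (\<Sum>U\<in>G. \<Prod>k<N. w k \<bullet> (U *v y))"
  by (rule sum_prod_inner_eqI) (rule sum_power_inner_orthogonal_invariant[OF assms])

lemma sum_power_quad_form_orthogonal_invariant:
  assumes "radial_invariants G (2 * p)" "orthogonal_matrix R"
  shows "(\<Sum>U\<in>G. quad_form M (R *v (U *v y)) ^ p) = (\<Sum>U\<in>G. quad_form M (U *v y) ^ p)"
proof -
  define v where "v f k = (if even k then axis (f (k div 2)) 1 else M $ f (k div 2))"
    for f :: "nat \<Rightarrow> 'n" and k :: nat
  let ?F = "PiE {..<p} (\<lambda>_. UNIV :: 'n set)"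
  have "(\<Sum>U\<in>G. quad_form M (R *v (U *v y)) ^ p) = (\<Sum>f\<in>?F. \<Sum>U\<in>G. \<Prod>k<2 * p. v f k \<bullet> (R *v (U *v y)))"
    unfolding power_quad_form_expand v_def by (rule sum.swap)
  also have "\<dots> = (\<Sum>f\<in>?F. \<Sum>U\<in>G. \<Prod>k<2 * p. v f k \<bullet> (U *v y))"
    using sum_prod_inner_orthogonal_invariant[OF assms] by simp
  also have "\<dots> = (\<Sum>U\<in>G. quad_form M (U *v y) ^ p)"
    unfolding power_quad_form_expand v_def by (rule sum.swap)
  finally show ?thesis .
qed

definition orbit_moment :: "nat \<Rightarrow> real^'n^'n \<Rightarrow> real^'n \<Rightarrow> real" where
  "orbit_moment p M y = (\<Sum>U\<in>G. quad_form M (U *v y) ^ p) / card G"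

lemma orbit_moment_orthogonal_conj:
  assumes "radial_invariants G (2 * p)" "orthogonal_matrix R"
  shows "orbit_moment p (transpose R ** M ** R) y = orbit_moment p M y"
  using sum_power_quad_form_orthogonal_invariant[OF assms] by (simp add: orbit_moment_def quad_form_conj)

lemma orbit_moment_radial:
  assumes "radial_invariants G (2 * p)" "norm e = 1"
  shows "orbit_moment p M y = orbit_moment p M e * norm y ^ (2 * p)"
proof -
  have "hom_poly (2 * p) (\<lambda>y. quad_form M (U *v y) ^ p)" for U
    by (rule hom_poly_power[OF hom_poly_linear_comp[OF hom_poly_quad_form]])
  then have "hom_poly (2 * p) (\<lambda>y. \<Sum>U\<in>G. quad_form M (U *v y) ^ p)"
    by (intro hom_poly_sum finite_G)
  moreover have "\<And>V x. V \<in> G \<Longrightarrow>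
      (\<Sum>U\<in>G. quad_form M (U *v (V *v x)) ^ p) = (\<Sum>U\<in>G. quad_form M (U *v x) ^ p)"
    by (rule sum_action_invariant)
  ultimately have "(\<Sum>U\<in>G. quad_form M (U *v y) ^ p) = (\<Sum>U\<in>G. quad_form M (U *v e) ^ p) * norm y ^ (2 * p)"
    by (rule radial_invariantsD[OF assms(1) _ _ assms(2)])
  then show ?thesis by (simp add: orbit_moment_def)
qed

lemma hom_poly_orbit_moment_diag_mat: "hom_poly p (\<lambda>\<mu>. orbit_moment p (diag_mat \<mu>) y)"
proof -
  have "hom_poly (1 * p) (\<lambda>\<mu>. quad_form (diag_mat \<mu>) (U *v y) ^ p)" for U :: "real^'n^'n"
    unfolding quad_form_diag_mat by (rule hom_poly_power[OF hom_poly_linear])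
  then have "hom_poly p (\<lambda>\<mu>. inverse (card G) * (\<Sum>U\<in>G. quad_form (diag_mat \<mu>) (U *v y) ^ p))"
    by (intro hom_poly_cmult hom_poly_sum finite_G) simp
  then show ?thesis by (simp add: orbit_moment_def field_simps)
qed

lemma symmetric_orbit_moment_diag_mat:
  assumes "radial_invariants G (2 * p)"
  shows "symmetric_fun (\<lambda>\<mu>. orbit_moment p (diag_mat \<mu>) y)"
  unfolding symmetric_fun_def
proof (intro allI impI)
  fix \<pi> :: "'n \<Rightarrow> 'n" and \<mu> :: "real^'n"
  assume \<pi>: "\<pi> permutes UNIV"
  let ?P = "permutation_matrix \<pi>"
  have "orbit_moment p (diag_mat (\<chi> i. \<mu> $ \<pi> i)) y = orbit_moment p (transpose ?P ** diag_mat \<mu> ** ?P) y"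
    by (simp add: orbit_moment_def quad_form_conj quad_form_diag_mat_permute[OF \<pi>])
  also have "\<dots> = orbit_moment p (diag_mat \<mu>) y"
    by (rule orbit_moment_orthogonal_conj[OF assms orthogonal_permutation_matrix[OF \<pi>]])
  finally show "orbit_moment p (diag_mat (\<chi> i. \<mu> $ \<pi> i)) y = orbit_moment p (diag_mat \<mu>) y" .
qed

end

section \<open>Spectral theorem for real symmetric matrices\<close>

lemma symmetric_matrix_inner:
  fixes M :: "real^'n^'n"
  assumes "transpose M = M"
  shows "(M *v x) \<bullet> y = x \<bullet> (M *v y)"
  using inner_transpose_mult[of y M x] assms by (simp add: inner_commute del: transpose_matrix_vector)

text \<open>Otherwise moving x0 in the direction of the residual w = M x0 - quad_form M x0 x0 would
  increase the Rayleigh quotient to first order.\<close>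
lemma rayleigh_maximizer_eigenvector:
  fixes M :: "real^'n^'n"
  assumes sym: "transpose M = M"
    and T: "subspace T" "\<And>x. x \<in> T \<Longrightarrow> M *v x \<in> T"
    and x0: "x0 \<in> T" "norm x0 = 1"
    and max: "\<And>x. x \<in> T \<Longrightarrow> norm x = 1 \<Longrightarrow> quad_form M x \<le> quad_form M x0"
  shows "M *v x0 = quad_form M x0 *\<^sub>R x0"
proof -
  define \<mu> where "\<mu> = quad_form M x0"
  define w where "w = M *v x0 - \<mu> *\<^sub>R x0"
  have x0x0: "x0 \<bullet> x0 = 1" using x0(2) by (simp add: norm_eq_1)
  have wT: "w \<in> T" unfolding w_def using T x0(1) by (simp add: subspace_diff subspace_scale)
  have "x0 \<bullet> w = 0"
    unfolding w_def \<mu>_def quad_form_def by (simp add: inner_diff_right x0x0)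
  then have wx0: "w \<bullet> x0 = 0" by (simp add: inner_commute)
  have "M *v x0 = w + \<mu> *\<^sub>R x0" by (simp add: w_def)
  then have wM: "w \<bullet> (M *v x0) = w \<bullet> w" by (simp add: inner_add_right wx0)
  have Mw: "x0 \<bullet> (M *v w) = w \<bullet> w"
    using symmetric_matrix_inner[OF sym, of x0 w] wM by (simp add: inner_commute)
  have bound: "2 * (w \<bullet> w) \<le> s * (\<mu> * (w \<bullet> w) - quad_form M w)" if s: "s > 0" for s
  proof -
    define z where "z = x0 + s *\<^sub>R w"
    have zz: "z \<bullet> z = 1 + s\<^sup>2 * (w \<bullet> w)"
      by (simp add: z_def inner_add_left inner_add_right x0x0 wx0 inner_commute power2_eq_square)
    then have zpos: "z \<bullet> z > 0" by (simp add: add_pos_nonneg)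
    have "z \<in> T" unfolding z_def using T x0(1) wT by (simp add: subspace_add subspace_scale)
    then have "quad_form M (z /\<^sub>R norm z) \<le> \<mu>"
      using max zpos unfolding \<mu>_def by (simp add: subspace_scale[OF T(1)])
    moreover have "quad_form M (z /\<^sub>R norm z) = quad_form M z / (z \<bullet> z)"
      by (simp add: quad_form_def matrix_vector_mult_scaleR power2_norm_eq_inner[symmetric]
          power2_eq_square divide_inverse)
    ultimately have "quad_form M z \<le> \<mu> * (z \<bullet> z)"
      using zpos by (simp add: divide_le_eq)
    moreover have "quad_form M z = \<mu> + 2 * s * (w \<bullet> w) + s\<^sup>2 * quad_form M w"
      unfolding z_def quad_form_def
      by (simp add: matrix_vector_right_distrib matrix_vector_mult_scaleR inner_add_left inner_add_right
          wM Mw power2_eq_square algebra_simps flip: quad_form_def \<mu>_def)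
    ultimately have "s * (2 * (w \<bullet> w)) \<le> s * (s * (\<mu> * (w \<bullet> w) - quad_form M w))"
      using zz by (simp add: power2_eq_square algebra_simps)
    then show ?thesis using s by simp
  qed
  have "w \<bullet> w = 0"
  proof (rule ccontr)
    assume "w \<bullet> w \<noteq> 0"
    then have W: "w \<bullet> w > 0" by (simp add: order_less_le)
    define B where "B = \<mu> * (w \<bullet> w) - quad_form M w"
    define s where "s = (w \<bullet> w) / (\<bar>B\<bar> + 1)"
    have s: "s > 0" unfolding s_def using W by (simp add: add_pos_nonneg)
    have "2 * (w \<bullet> w) \<le> s * B" using bound[OF s] unfolding B_def .
    also have "\<dots> \<le> s * \<bar>B\<bar>" using s by (intro mult_left_mono) auto
    also have "\<dots> = (w \<bullet> w) * (\<bar>B\<bar> / (\<bar>B\<bar> + 1))" unfolding s_def by simp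
    also have "\<dots> \<le> (w \<bullet> w) * 1" using W by (intro mult_left_mono) (auto simp: divide_simps)
    finally show False using W by simp
  qed
  then show ?thesis unfolding w_def \<mu>_def by simp
qed

lemma eigenvector_orthogonal_exists:
  fixes M :: "real^'n^'n" and S :: "(real^'n) set"
  assumes sym: "transpose M = M" and S: "finite S" "card S < CARD('n)"
    and eigen: "\<And>b. b \<in> S \<Longrightarrow> \<exists>a. M *v b = a *\<^sub>R b"
  shows "\<exists>x. norm x = 1 \<and> (\<forall>b\<in>S. b \<bullet> x = 0) \<and> (\<exists>a. M *v x = a *\<^sub>R x)"
proof -
  define T where "T = {x. \<forall>b\<in>S. orthogonal b x}"
  have T: "subspace T" unfolding T_def by (rule subspace_orthogonal_to_vectors)
  have invariant: "M *v x \<in> T" if "x \<in> T" for x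
  proof -
    have "b \<bullet> (M *v x) = 0" if "b \<in> S" for b
      using eigen[OF that] symmetric_matrix_inner[OF sym, of b x] \<open>x \<in> T\<close> that
      by (auto simp: T_def orthogonal_def)
    then show ?thesis by (simp add: T_def orthogonal_def)
  qed
  have "dim S < DIM(real^'n)" using dim_le_card'[OF S(1)] S(2) by simp
  then obtain z :: "real^'n" where z: "z \<noteq> 0" "\<And>y. y \<in> span S \<Longrightarrow> orthogonal z y"
    using orthogonal_to_subspace_exists by blast
  define K where "K = sphere 0 1 \<inter> T"
  have "compact K"
    unfolding K_def by (intro compact_Int_closed compact_sphere closed_subspace T)
  moreover have "z /\<^sub>R norm z \<in> K"
    using z T unfolding K_def T_def
    by (auto simp: orthogonal_commute span_base intro: orthogonal_clauses)
  moreover have "continuous_on K (quad_form M)"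
    unfolding quad_form_def by (intro continuous_intros)
  ultimately obtain x0 where x0: "x0 \<in> K" and max: "\<And>x. x \<in> K \<Longrightarrow> quad_form M x \<le> quad_form M x0"
    using continuous_attains_sup[of K "quad_form M"] by blast
  have "M *v x0 = quad_form M x0 *\<^sub>R x0"
    using x0 max by (intro rayleigh_maximizer_eigenvector[OF sym T invariant]) (auto simp: K_def)
  then show ?thesis using x0 by (auto simp: K_def T_def orthogonal_def)
qed

lemma orthonormal_eigenvectors_exist:
  fixes M :: "real^'n^'n"
  assumes sym: "transpose M = M" and "k \<le> CARD('n)"
  shows "\<exists>S. finite S \<and> card S = k \<and> (\<forall>x\<in>S. norm x = 1 \<and> (\<exists>a. M *v x = a *\<^sub>R x))
     \<and> pairwise orthogonal S"
  using assms(2)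
proof (induction k)
  case 0
  show ?case by (intro exI[of _ "{}"]) simp
next
  case (Suc k)
  then obtain S where S: "finite S" "card S = k" "\<forall>x\<in>S. norm x = 1 \<and> (\<exists>a. M *v x = a *\<^sub>R x)"
    "pairwise orthogonal S" by auto
  obtain x where x: "norm x = 1" "\<forall>b\<in>S. b \<bullet> x = 0" "\<exists>a. M *v x = a *\<^sub>R x"
    using eigenvector_orthogonal_exists[OF sym S(1)] S Suc.prems by auto
  have "x \<notin> S" using x(1,2) by force
  moreover have "\<forall>b\<in>S. orthogonal b x \<and> orthogonal x b"
    using x(2) by (simp add: orthogonal_def inner_commute)
  ultimately show ?case
    using S x by (intro exI[of _ "insert x S"]) (auto simp: pairwise_insert)
qed

theorem spectral_decomposition:
  fixes M :: "real^'n^'n"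
  assumes sym: "transpose M = M"
  obtains R \<mu> where "orthogonal_matrix R" "M = transpose R ** diag_mat \<mu> ** R"
proof -
  obtain S where S: "finite S" "card S = CARD('n)" "\<forall>x\<in>S. norm x = 1 \<and> (\<exists>a. M *v x = a *\<^sub>R x)"
    "pairwise orthogonal S"
    using orthonormal_eigenvectors_exist[OF sym order_refl] by blast
  obtain f where f: "bij_betw f (UNIV::'n set) S"
    using finite_same_card_bij[of "UNIV::'n set" S] S by auto
  then have fS: "f i \<in> S" and f_inj: "f i = f j \<Longrightarrow> i = j" for i j
    by (auto simp: bij_betw_def inj_on_def)
  define R :: "real^'n^'n" where "R = (\<chi> i. f i)"
  define \<mu> :: "real^'n" where "\<mu> = (\<chi> i. quad_form M (f i))"
  have eigen: "M *v f i = (\<mu> $ i) *\<^sub>R f i" for i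
  proof -
    obtain a where a: "M *v f i = a *\<^sub>R f i" using S(3) fS by blast
    have "f i \<bullet> f i = 1" using S(3) fS by (simp add: norm_eq_1)
    then show ?thesis using a by (simp add: \<mu>_def quad_form_def)
  qed
  have row_R: "row i R = f i" for i unfolding R_def row_def by (simp add: vec_eq_iff)
  have R: "orthogonal_matrix R"
    unfolding orthogonal_matrix_orthonormal_rows row_R
    using S(3,4) fS f_inj by (metis pairwise_def)
  have "M ** transpose R = transpose R ** diag_mat \<mu>"
  proof -
    have "(M ** transpose R) $ a $ i = (transpose R ** diag_mat \<mu>) $ a $ i" for a i
    proof -
      have "(M ** transpose R) $ a $ i = (M *v f i) $ a"
        by (simp add: matrix_matrix_mult_def matrix_vector_mult_def transpose_def R_def)
      also have "\<dots> = (transpose R ** diag_mat \<mu>) $ a $ i"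
        by (simp add: eigen matrix_matrix_mult_def transpose_def R_def diag_mat_def
            if_distrib[of "\<lambda>t. _ * t"] cong: if_cong)
      finally show ?thesis .
    qed
    then show ?thesis by (simp add: vec_eq_iff)
  qed
  then have "M = transpose R ** diag_mat \<mu> ** R"
    using R by (metis matrix_mul_assoc matrix_mul_rid orthogonal_matrix_def)
  with R that show ?thesis by blast
qed

lemma eigen_list_orthogonal_conj_diag:
  fixes R :: "real^'n^'n"
  assumes R: "orthogonal_matrix R"
  shows "eigen_list \<mu> (transpose R ** diag_mat \<mu> ** R)"
  unfolding eigen_list_def
proof
  fix t :: real
  have RR: "transpose R ** R = mat 1" using R by (simp add: orthogonal_matrix)
  have RRx: "transpose R *v (R *v x) = x" for x
    by (simp add: matrix_vector_mul_assoc RR del: transpose_matrix_vector)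
  have "(t *\<^sub>R mat 1 - transpose R ** diag_mat \<mu> ** R) *v x = (transpose R ** (t *\<^sub>R mat 1 - diag_mat \<mu>) ** R) *v x"
    for x
    by (simp add: matrix_vector_mul_assoc[symmetric] matrix_vector_mult_diff_rdistrib
        matrix_vector_mult_diff_distrib scaleR_matrix_vector_assoc[symmetric] matrix_vector_mult_scaleR RRx
        del: transpose_matrix_vector)
  then have "t *\<^sub>R mat 1 - transpose R ** diag_mat \<mu> ** R = transpose R ** (t *\<^sub>R mat 1 - diag_mat \<mu>) ** R"
    by (simp add: matrix_eq)
  then have "det (t *\<^sub>R mat 1 - transpose R ** diag_mat \<mu> ** R) = det (t *\<^sub>R mat 1 - diag_mat \<mu>) * det (transpose R ** R)"
    by (simp add: det_mul)
  also have "\<dots> = (\<Prod>i\<in>UNIV. t - \<mu> $ i)"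
    by (simp add: RR det_diagonal mat_def diag_mat_def)
  finally show "det (t *\<^sub>R mat 1 - transpose R ** diag_mat \<mu> ** R) = (\<Prod>i\<in>UNIV. t - \<mu> $ i)" .
qed

lemma prod_linear_factors_eq_bij:
  fixes a b :: "'i \<Rightarrow> real"
  assumes "finite A" "finite B" "(\<Prod>i\<in>A. [:- a i, 1:]) = (\<Prod>j\<in>B. [:- b j, 1:])"
  shows "\<exists>f. bij_betw f A B \<and> (\<forall>i\<in>A. b (f i) = a i)"
  using assms
proof (induction A arbitrary: B rule: finite_induct)
  case empty
  have "B = {}"
  proof (rule ccontr)
    assume "B \<noteq> {}"
    then obtain j where "j \<in> B" by blast
    then have "poly (\<Prod>j\<in>B. [:- b j, 1:]) (b j) = 0"
      using empty.prems(1) by (auto simp: poly_prod)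
    then show False using empty.prems(2) by simp
  qed
  then show ?case by (simp add: bij_betw_def)
next
  case (insert x A)
  have "poly (\<Prod>j\<in>B. [:- b j, 1:]) (a x) = 0"
    unfolding insert.prems(2)[symmetric] using insert.hyps by (simp add: poly_prod)
  then obtain j where j: "j \<in> B" "b j = a x"
    using insert.prems(1) by (auto simp: poly_prod)
  have "[:- a x, 1:] * (\<Prod>i\<in>A. [:- a i, 1:]) = [:- a x, 1:] * (\<Prod>j\<in>B - {j}. [:- b j, 1:])"
    using insert.prems(2) insert.hyps prod.remove[OF insert.prems(1) j(1), of "\<lambda>j. [:- b j, 1:]"] j(2)
    by simp
  moreover have "[:- a x, 1:] \<noteq> 0" by simp
  ultimately have "(\<Prod>i\<in>A. [:- a i, 1:]) = (\<Prod>j\<in>B - {j}. [:- b j, 1:])"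
    using mult_left_cancel by blast
  then obtain g where g: "bij_betw g A (B - {j})" "\<forall>i\<in>A. b (g i) = a i"
    using insert.IH insert.prems(1) by blast
  define f where "f = g(x := j)"
  have "bij_betw f A (B - {j})"
    using g(1) insert.hyps(2) unfolding f_def by (metis bij_betw_cong fun_upd_other)
  then have "bij_betw f (insert x A) (insert j (B - {j}))"
    using notIn_Un_bij_betw3[of x A f "B - {j}"] insert.hyps(2) by (simp add: f_def)
  moreover have "insert j (B - {j}) = B" using j(1) by auto
  moreover have "\<forall>i\<in>insert x A. b (f i) = a i" using g(2) j(2) insert.hyps(2)
    by (auto simp: f_def)
  ultimately show ?case by auto
qed

lemma eigen_list_permutation:
  fixes M :: "real^'n^'n"
  assumes "eigen_list lam M" "eigen_list \<mu> M"
  obtains \<pi> where "\<pi> permutes UNIV" "lam = (\<chi> i. \<mu> $ \<pi> i)"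
proof -
  have "poly (\<Prod>i\<in>UNIV. [:- (lam $ i), 1:]) = poly (\<Prod>i\<in>UNIV. [:- (\<mu> $ i), 1:])"
    using assms unfolding eigen_list_def by (auto simp: poly_prod fun_eq_iff)
  then have "(\<Prod>i\<in>UNIV. [:- (lam $ i), 1:]) = (\<Prod>i\<in>UNIV. [:- (\<mu> $ i), 1:])"
    by (simp add: poly_eq_poly_eq_iff)
  then obtain f where f: "bij_betw f (UNIV::'n set) UNIV" "\<forall>i. \<mu> $ f i = lam $ i"
    using prod_linear_factors_eq_bij[of UNIV UNIV "\<lambda>i. lam $ i" "\<lambda>i. \<mu> $ i"] by auto
  have "f permutes UNIV" using f(1) by (simp add: permutes_univ bij_betw_def bij_iff[symmetric] bij_def)
  moreover have "lam = (\<chi> i. \<mu> $ f i)" using f(2) by (simp add: vec_eq_iff)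
  ultimately show ?thesis using that by blast
qed

lemma hs_inner_proj: "hs_inner M (proj z) = quad_form M z"
proof -
  have "hs_inner M (proj z) = (\<Sum>i\<in>UNIV. \<Sum>k\<in>UNIV. M $ k $ i * (z $ k * z $ i))"
    unfolding hs_inner_def proj_def trace_def by (simp add: matrix_matrix_mult_def transpose_def)
  also have "\<dots> = (\<Sum>k\<in>UNIV. \<Sum>i\<in>UNIV. M $ k $ i * (z $ k * z $ i))" by (rule sum.swap)
  also have "\<dots> = quad_form M z"
    by (simp add: quad_form_def inner_vec_def matrix_vector_mult_def sum_distrib_left mult_ac)
  finally show ?thesis .
qed

lemma hs_norm_proj: "hs_norm (proj y) = norm y ^ 2"
proof -
  have "proj y *v y = (y \<bullet> y) *\<^sub>R y"
    by (simp add: proj_def matrix_vector_mult_def inner_vec_def vec_eq_iff sum_distrib_left mult_ac)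
  then have "hs_inner (proj y) (proj y) = (y \<bullet> y)\<^sup>2"
    by (simp add: hs_inner_proj quad_form_def power2_eq_square)
  then show ?thesis unfolding hs_norm_def by (simp add: power2_norm_eq_inner)
qed

theorem theorem3p2:
  fixes G :: "(real^'n^'n) set" and p :: nat
  assumes finG: "finite G"
    and orth: "\<forall>U\<in>G. orthogonal_matrix U"
    and nonempty: "G \<noteq> {}"
    and mult_closed: "\<forall>A\<in>G. \<forall>B\<in>G. A ** B \<in> G"
    and inv_closed: "\<forall>A\<in>G. matrix_inv A \<in> G"
    and p1: "p \<ge> 1"
    and inv_hyp: "\<forall>f. hom_poly (2*p) f \<and> (\<forall>U\<in>G. \<forall>x. f (U *v x) = f x)
                   \<longrightarrow> (\<exists>c. \<forall>x. f x = c * norm x ^ (2*p))"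
  shows "\<exists>F. hom_poly p F \<and> symmetric_fun F \<and>
           (\<forall>M lam y. symmetric_mat M \<and> eigen_list lam M \<longrightarrow>
              (1 / real (card G)) * (\<Sum>U\<in>G. (hs_inner M (proj (U *v y))) ^ p)
                = F lam * hs_norm (proj y) ^ p
            \<and> F lam * hs_norm (proj y) ^ p = F lam * norm y ^ (2*p))"
proof -
  interpret finite_orthogonal_group G
    using finG orth mult_closed inv_closed by unfold_locales auto
  have radial: "radial_invariants G (2 * p)"
    using inv_hyp unfolding radial_invariants_def by blast
  define e :: "real^'n" where "e = axis undefined 1"
  have e: "norm e = 1" by (simp add: e_def)
  define F where "F \<mu> = orbit_moment p (diag_mat \<mu>) e" for \<mu>
  have symF: "symmetric_fun F"
    unfolding F_def by (rule symmetric_orbit_moment_diag_mat[OF radial])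
  have "(1 / real (card G)) * (\<Sum>U\<in>G. hs_inner M (proj (U *v y)) ^ p) = F lam * norm y ^ (2 * p)"
    if sym: "symmetric_mat M" and eigen: "eigen_list lam M" for M lam y
  proof -
    obtain R \<mu> where R: "orthogonal_matrix R" and M: "M = transpose R ** diag_mat \<mu> ** R"
      using spectral_decomposition sym unfolding symmetric_mat_def by blast
    obtain \<pi> where "\<pi> permutes UNIV" "lam = (\<chi> i. \<mu> $ \<pi> i)"
      using eigen_list_permutation[OF eigen] eigen_list_orthogonal_conj_diag[OF R] M by blast
    then have F_lam: "F lam = F \<mu>" using symF by (simp add: symmetric_fun_def)
    have "(1 / real (card G)) * (\<Sum>U\<in>G. hs_inner M (proj (U *v y)) ^ p) = orbit_moment p M y"
      by (simp add: orbit_moment_def hs_inner_proj)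
    also have "\<dots> = orbit_moment p (diag_mat \<mu>) y"
      unfolding M by (rule orbit_moment_orthogonal_conj[OF radial R])
    also have "\<dots> = F \<mu> * norm y ^ (2 * p)"
      unfolding F_def by (rule orbit_moment_radial[OF radial e])
    finally show ?thesis by (simp add: F_lam)
  qed
  moreover have "hom_poly p F"
    unfolding F_def by (rule hom_poly_orbit_moment_diag_mat)
  ultimately show ?thesis
    using symF by (auto simp: hs_norm_proj power_mult)
qed

end
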